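(* Let $A,B\in\mathcal M_n$ be accretive with $W(A),W(B)\subset S_\alpha$ for some $0\le\alpha<\pi/2$. Then $$\cos^3(\alpha)\,\Re\big[(A\nabla B)\sharp(A!B)\big]\le \Re(A\sharp B)\le \sec^2(\alpha)\,\Re\big[(A\nabla B)\sharp(A!B)\big].$$
   Context: A matrix $A$ is accretive if $\Re A=\frac{A+A^*}{2}$ is positive definite. $W(A)=\{\langle Ax,x\rangle:\|x\|=1\}$ is the numerical range, and $S_\alpha=\{z\in\mathbb C:\Re z>0,\ |\Im z|\le\tan(\alpha)\Re z\}$. For Hermitian $X,Y$, $X\le Y$ means $Y-X$ is positive semidefinite. For accretive $A,B$: $A\nabla B=\frac{A+B}{2}$, $A!B=\big(\frac{A^{-1}+B^{-1}}{2}\big)^{-1}$, and $A\sharp B=A\sharp_{1/2}B$ where $A\sharp_\lambda B=\frac{\sin(\lambda\pi)}{\pi}\int_0^\infty t^{\lambda-1}(A^{-1}+tB^{-1})^{-1}dt$. *)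

theory Defs
  imports "HOL-Analysis.Analysis"
begin

definition cinner :: "complex^'n \<Rightarrow> complex^'n \<Rightarrow> complex" where
  "cinner x y = (\<Sum>i\<in>UNIV. x$i * cnj (y$i))"

definition adjoint_mat :: "complex^'n^'n \<Rightarrow> complex^'n^'n" where
  "adjoint_mat A = (\<chi> i j. cnj (A$j$i))"

definition hermitian_mat :: "complex^'n^'n \<Rightarrow> bool" where
  "hermitian_mat A \<longleftrightarrow> adjoint_mat A = A"

definition ReM :: "complex^'n^'n \<Rightarrow> complex^'n^'n" where
  "ReM A = (A + adjoint_mat A) /\<^sub>R 2"

definition pos_def :: "complex^'n^'n \<Rightarrow> bool" where
  "pos_def H \<longleftrightarrow> hermitian_mat H \<and> (\<forall>x. x \<noteq> 0 \<longrightarrow> Re (cinner (H *v x) x) > 0)"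

definition pos_semidef :: "complex^'n^'n \<Rightarrow> bool" where
  "pos_semidef H \<longleftrightarrow> hermitian_mat H \<and> (\<forall>x. Re (cinner (H *v x) x) \<ge> 0)"

definition loewner_le :: "complex^'n^'n \<Rightarrow> complex^'n^'n \<Rightarrow> bool" where
  "loewner_le X Y \<longleftrightarrow> pos_semidef (Y - X)"

definition accretive :: "complex^'n^'n \<Rightarrow> bool" where
  "accretive A \<longleftrightarrow> pos_def (ReM A)"

definition numerical_range :: "complex^'n^'n \<Rightarrow> complex set" where
  "numerical_range A = {cinner (A *v x) x | x. norm x = 1}"

definition sector :: "real \<Rightarrow> complex set" where
  "sector \<alpha> = {z. Re z > 0 \<and> \<bar>Im z\<bar> \<le> tan \<alpha> * Re z}"

definition arith_mean :: "complex^'n^'n \<Rightarrow> complex^'n^'n \<Rightarrow> complex^'n^'n" where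
  "arith_mean A B = (A + B) /\<^sub>R 2"

definition harm_mean :: "complex^'n^'n \<Rightarrow> complex^'n^'n \<Rightarrow> complex^'n^'n" where
  "harm_mean A B = matrix_inv ((matrix_inv A + matrix_inv B) /\<^sub>R 2)"

text \<open>Weighted geometric mean via the integral representation.\<close>
definition wgeo_mean :: "real \<Rightarrow> complex^'n^'n \<Rightarrow> complex^'n^'n \<Rightarrow> complex^'n^'n" where
  "wgeo_mean l A B = (sin (l * pi) / pi) *\<^sub>R
     integral {0<..} (\<lambda>t. (t powr (l - 1)) *\<^sub>R matrix_inv (matrix_inv A + t *\<^sub>R matrix_inv B))"

definition geo_mean :: "complex^'n^'n \<Rightarrow> complex^'n^'n \<Rightarrow> complex^'n^'n" where
  "geo_mean A B = wgeo_mean (1/2) A B"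

end

theory Submission
  imports Defs
begin

text \<open>
  Writing \<open>P = A\<^sup>-\<^sup>1, Q = B\<^sup>-\<^sup>1\<close>, the integrand of
  \<open>A \<sharp> B\<close> is \<open>t\<^sup>-\<^sup>1\<^sup>/\<^sup>2 (P + tQ)\<^sup>-\<^sup>1\<close>; folding its integral over \<open>(0,\<infinity>)\<close> onto \<open>(0,1)\<close> by \<open>t \<mapsto> 1/t\<close>
  and substituting \<open>t = 4u/(1-u)\<^sup>2\<close> in the integral for \<open>(A \<nabla> B) \<sharp> (A ! B)\<close> makes the two
  integrands agree pointwise, because \<open>(A \<nabla> B)\<^sup>-\<^sup>1 + t (A ! B)\<^sup>-\<^sup>1\<close> factors through \<open>P + uQ\<close> and
  \<open>uP + Q\<close>. Both sides of the inequality are therefore multiples of \<open>H = Re (A \<sharp> B)\<close>, which is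
  positive semidefinite since every \<open>(P + tQ)\<^sup>-\<^sup>1\<close> is accretive; and \<open>cos\<^sup>3 \<alpha> \<le> 1 \<le> sec\<^sup>2 \<alpha>\<close>.
\<close>

section \<open>Sesquilinear form and Hermitian part\<close>

lemma cinner_add_left: "cinner (x + y) z = cinner x z + cinner y z"
  by (simp add: cinner_def distrib_right sum.distrib)

lemma cinner_scaleR_left: "cinner (c *\<^sub>R x) z = of_real c * cinner x z"
  unfolding cinner_def vector_scaleR_component by (simp add: scaleR_conv_of_real sum_distrib_left mult.assoc)

lemma cinner_scaleR_right: "cinner x (c *\<^sub>R z) = of_real c * cinner x z"
  unfolding cinner_def vector_scaleR_component by (simp add: scaleR_conv_of_real sum_distrib_left mult_ac)

lemma cinner_commute: "cinner y x = cnj (cinner x y)"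
  by (simp add: cinner_def mult.commute)

lemma cinner_zero_left [simp]: "cinner 0 x = 0"
  by (simp add: cinner_def)

lemma norm_cinner_le: "cmod (cinner x y) \<le> norm x * norm y"
proof -
  have "cmod (cinner x y) \<le> (\<Sum>i\<in>UNIV. cmod (x$i) * cmod (y$i))"
    unfolding cinner_def by (rule order_trans[OF norm_sum]) (simp add: norm_mult)
  also have "\<dots> \<le> L2_set (\<lambda>i. cmod (x$i)) UNIV * L2_set (\<lambda>i. cmod (y$i)) UNIV"
    using L2_set_mult_ineq[of "\<lambda>i. cmod (x$i)" "\<lambda>i. cmod (y$i)" UNIV] by simp
  finally show ?thesis by (simp add: norm_vec_def)
qed

lemma cinner_adjoint: "cinner (M *v x) y = cinner x (adjoint_mat M *v y)"
proof -
  have "cinner (M *v x) y = (\<Sum>i\<in>UNIV. \<Sum>j\<in>UNIV. M$i$j * x$j * cnj (y$i))"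
    unfolding cinner_def matrix_vector_mult_def by (simp add: sum_distrib_right)
  also have "\<dots> = (\<Sum>j\<in>UNIV. \<Sum>i\<in>UNIV. M$i$j * x$j * cnj (y$i))"
    by (rule sum.swap)
  also have "\<dots> = cinner x (adjoint_mat M *v y)"
    unfolding cinner_def matrix_vector_mult_def adjoint_mat_def
    by (simp add: sum_distrib_left mult_ac)
  finally show ?thesis .
qed

lemma matrix_vector_mult_scaleR_right:
  fixes M :: "'a::real_algebra_1^'n^'m"
  shows "M *v (c *\<^sub>R x) = c *\<^sub>R (M *v x)"
  by (simp add: vec_eq_iff matrix_vector_mult_def scaleR_sum_right)

lemma matrix_vector_mult_scaleR_left:
  fixes M :: "'a::real_algebra_1^'n^'m"
  shows "(c *\<^sub>R M) *v x = c *\<^sub>R (M *v x)"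
  by (simp add: vec_eq_iff matrix_vector_mult_def scaleR_sum_right)

lemma adjoint_mat_add: "adjoint_mat (X + Y) = adjoint_mat X + adjoint_mat Y"
  by (simp add: adjoint_mat_def vec_eq_iff)

lemma adjoint_mat_scaleR: "adjoint_mat (c *\<^sub>R X) = c *\<^sub>R adjoint_mat X"
  by (simp add: adjoint_mat_def vec_eq_iff)

lemma hermitian_ReM: "hermitian_mat (ReM M)"
  unfolding hermitian_mat_def ReM_def adjoint_mat_scaleR adjoint_mat_add
  by (simp add: adjoint_mat_def add.commute vec_eq_iff)

lemma Re_cinner_ReM: "Re (cinner (ReM M *v x) x) = Re (cinner (M *v x) x)"
proof -
  have "Re (cinner (adjoint_mat M *v x) x) = Re (cinner (M *v x) x)"
    by (metis cinner_adjoint cinner_commute cnj.simps(1))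
  then show ?thesis
    by (simp add: ReM_def matrix_vector_mult_scaleR_left matrix_vector_mult_add_rdistrib
        cinner_scaleR_left cinner_add_left)
qed

section \<open>Matrix inverses\<close>

lemma matrix_add_rdistrib: "((A::'a::semiring_1^'n^'m) + B) ** C = A ** C + B ** C"
  by (vector matrix_matrix_mult_def sum.distrib[symmetric] field_simps)

lemma matrix_diff_ldistrib: "(A::'a::ring_1^'n^'m) ** (B - C) = A ** B - A ** C"
  by (vector matrix_matrix_mult_def sum_subtractf[symmetric] field_simps)

lemma matrix_diff_rdistrib: "((A::'a::ring_1^'n^'m) - B) ** C = A ** C - B ** C"
  by (vector matrix_matrix_mult_def sum_subtractf[symmetric] field_simps)

lemma matrix_mul_scaleR_left: "(k *\<^sub>R A) ** B = k *\<^sub>R (A ** (B::'a::real_algebra_1^'n^'m))"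
  by (simp add: scalar_matrix_assoc)

lemma matrix_mul_scaleR_right: "A ** (k *\<^sub>R B) = k *\<^sub>R (A ** (B::'a::real_algebra_1^'n^'m))"
  by (simp add: matrix_scalar_ac scalar_matrix_assoc)

lemmas matrix_ring_simps = matrix_add_ldistrib matrix_add_rdistrib matrix_diff_ldistrib
  matrix_diff_rdistrib matrix_mul_scaleR_left matrix_mul_scaleR_right matrix_mul_assoc

lemma matrix_inv_right:
  fixes M :: "'a::field^'n^'n"
  assumes "invertible M" shows "M ** matrix_inv M = mat 1"
  using assms unfolding invertible_def matrix_inv_def by (rule someI_ex[THEN conjunct1])

lemma matrix_inv_left:
  fixes M :: "'a::field^'n^'n"
  assumes "invertible M" shows "matrix_inv M ** M = mat 1"
  using assms unfolding invertible_def matrix_inv_def by (rule someI_ex[THEN conjunct2])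

lemma matrix_inv_unique_right:
  fixes M :: "'a::field^'n^'n"
  assumes "M ** X = mat 1" shows "matrix_inv M = X"
proof -
  have inv: "invertible M" using assms invertible_right_inverse by blast
  have "matrix_inv M = matrix_inv M ** (M ** X)" using assms by simp
  also have "\<dots> = X" by (simp add: matrix_mul_assoc matrix_inv_left[OF inv])
  finally show ?thesis .
qed

lemma matrix_inv_unique_left:
  fixes M :: "'a::field^'n^'n"
  assumes "X ** M = mat 1" shows "matrix_inv M = X"
  using assms matrix_inv_unique_right matrix_left_right_inverse by blast

lemma matrix_inv_matrix_inv:
  fixes M :: "'a::field^'n^'n"
  assumes "invertible M" shows "matrix_inv (matrix_inv M) = M"
  by (rule matrix_inv_unique_right) (rule matrix_inv_left[OF assms])

lemma matrix_inv_scaleR_of_left_inverse: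
  fixes M X :: "'a::real_field^'n^'n"
  assumes "X ** M = mat 1" "c \<noteq> 0"
  shows "matrix_inv (c *\<^sub>R M) = inverse c *\<^sub>R X"
  by (rule matrix_inv_unique_left) (use assms in \<open>simp add: matrix_ring_simps\<close>)

lemma matrix_inv_diff:
  fixes X Y :: "'a::field^'n^'n"
  assumes "invertible X" "invertible Y"
  shows "matrix_inv X - matrix_inv Y = matrix_inv X ** (Y - X) ** matrix_inv Y"
proof -
  have "matrix_inv X ** (Y - X) ** matrix_inv Y
      = matrix_inv X ** (Y ** matrix_inv Y) - (matrix_inv X ** X) ** matrix_inv Y"
    by (simp only: matrix_diff_ldistrib matrix_diff_rdistrib matrix_mul_assoc)
  also have "\<dots> = matrix_inv X - matrix_inv Y"
    by (simp only: matrix_inv_right[OF assms(2)] matrix_inv_left[OF assms(1)]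
        matrix_mul_rid matrix_mul_lid)
  finally show ?thesis by (rule sym)
qed

lemma left_inverse_of_sum:
  fixes A B P Q :: "'a::field^'n^'n"
  assumes PA: "P ** A = mat 1" and QB: "Q ** B = mat 1" and "invertible (P + Q)"
  shows "(Q ** matrix_inv (P + Q) ** P) ** (A + B) = mat 1"
proof -
  let ?S = "matrix_inv (P + Q)"
  have "Q ** ?S ** P ** (A + B) = Q ** ?S ** (P ** A) + Q ** ?S ** P ** B"
    by (simp add: matrix_add_ldistrib matrix_mul_assoc)
  also have "\<dots> = Q ** ?S ** (Q ** B) + Q ** ?S ** P ** B"
    by (simp add: PA QB)
  also have "\<dots> = Q ** (?S ** (P + Q)) ** B"
    by (simp add: matrix_add_ldistrib matrix_add_rdistrib matrix_mul_assoc add.commute)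
  also have "\<dots> = mat 1"
    by (simp add: matrix_inv_left[OF assms(3)] QB)
  finally show ?thesis .
qed

lemma sandwich_inverse_sum:
  fixes P Q S :: "'a::real_field^'n^'n"
  assumes ST: "S ** (P + Q) = mat 1" and TS: "(P + Q) ** S = mat 1"
  shows "(u *\<^sub>R P + Q) ** S ** (P + u *\<^sub>R Q) = u *\<^sub>R (P + Q) + (1 - u)\<^sup>2 *\<^sub>R (Q ** S ** P)"
proof -
  have QSP: "Q ** S ** P = Q - Q ** S ** Q"
    using arg_cong[OF ST, of "\<lambda>M. Q ** M"] by (simp add: matrix_ring_simps algebra_simps)
  have PSQ: "P ** S ** Q = Q - Q ** S ** Q"
    using arg_cong[OF TS, of "\<lambda>M. M ** Q"] by (simp add: matrix_ring_simps algebra_simps)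
  have PSP: "P ** S ** P = P - Q ** S ** P"
    using arg_cong[OF TS, of "\<lambda>M. M ** P"] by (simp add: matrix_ring_simps algebra_simps)
  show ?thesis
    by (simp add: matrix_ring_simps PSP PSQ QSP algebra_simps power2_eq_square)
      (simp add: vec_eq_iff scaleR_conv_of_real algebra_simps)
qed

lemma sum_of_inverse_pencils:
  fixes P Q R\<^sub>1 R\<^sub>2 :: "'a::real_field^'n^'n"
  assumes R1: "R\<^sub>1 ** (P + u *\<^sub>R Q) = mat 1" and R2: "(u *\<^sub>R P + Q) ** R\<^sub>2 = mat 1"
  shows "R\<^sub>1 + R\<^sub>2 = (1 + u) *\<^sub>R (R\<^sub>1 ** (P + Q) ** R\<^sub>2)"
proof -
  have "(1 + u) *\<^sub>R (R\<^sub>1 ** (P + Q) ** R\<^sub>2) = R\<^sub>1 ** ((u *\<^sub>R P + Q) ** R\<^sub>2) + R\<^sub>1 ** (P + u *\<^sub>R Q) ** R\<^sub>2"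
    by (simp add: matrix_ring_simps algebra_simps)
  also have "\<dots> = R\<^sub>1 + R\<^sub>2" by (simp add: R1 R2)
  finally show ?thesis ..
qed

text \<open>With \<open>S = (P + Q)\<^sup>-\<^sup>1\<close>: \<open>(A + B)\<^sup>-\<^sup>1 = QSP\<close>, and for \<open>t = 4u/(1-u)\<^sup>2\<close> the matrix
  \<open>2QSP + t (P + Q)/2\<close> equals \<open>2/(1-u)\<^sup>2 \<cdot> (uP + Q) S (P + uQ)\<close>, whose inverse is a multiple of
  \<open>(P + uQ)\<^sup>-\<^sup>1 (P + Q) (uP + Q)\<^sup>-\<^sup>1\<close>, i.e. of \<open>(P + uQ)\<^sup>-\<^sup>1 + (uP + Q)\<^sup>-\<^sup>1\<close>.\<close>

lemma matrix_inv_arith_harm_pencil: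
  fixes A B P Q :: "'a::real_field^'n^'n"
  assumes PA: "P ** A = mat 1" and QB: "Q ** B = mat 1" and "invertible (P + Q)"
    and inv1: "invertible (P + u *\<^sub>R Q)" and inv2: "invertible (u *\<^sub>R P + Q)"
    and u: "0 < u" "u < 1"
  shows "matrix_inv (matrix_inv ((A + B) /\<^sub>R 2) + (4 * u / (1 - u)\<^sup>2) *\<^sub>R ((P + Q) /\<^sub>R 2))
    = ((1 - u)\<^sup>2 / (2 * (1 + u))) *\<^sub>R (matrix_inv (P + u *\<^sub>R Q) + matrix_inv (u *\<^sub>R P + Q))"
proof -
  define S where "S = matrix_inv (P + Q)"
  define R\<^sub>1 where "R\<^sub>1 = matrix_inv (P + u *\<^sub>R Q)"
  define R\<^sub>2 where "R\<^sub>2 = matrix_inv (u *\<^sub>R P + Q)"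
  have ST: "S ** (P + Q) = mat 1" and TS: "(P + Q) ** S = mat 1"
    unfolding S_def using assms(3) by (simp_all add: matrix_inv_left matrix_inv_right)
  have "matrix_inv ((A + B) /\<^sub>R 2) = 2 *\<^sub>R (Q ** S ** P)"
    unfolding S_def using matrix_inv_scaleR_of_left_inverse[OF left_inverse_of_sum[OF PA QB assms(3)]]
    by simp
  then have sum: "matrix_inv ((A + B) /\<^sub>R 2) + (4 * u / (1 - u)\<^sup>2) *\<^sub>R ((P + Q) /\<^sub>R 2)
      = (2 / (1 - u)\<^sup>2) *\<^sub>R ((u *\<^sub>R P + Q) ** S ** (P + u *\<^sub>R Q))"
    using u unfolding sandwich_inverse_sum[OF ST TS] by (simp add: algebra_simps)
  have "(R\<^sub>1 ** (P + Q) ** R\<^sub>2) ** ((u *\<^sub>R P + Q) ** S ** (P + u *\<^sub>R Q))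
      = R\<^sub>1 ** (P + Q) ** (R\<^sub>2 ** (u *\<^sub>R P + Q)) ** S ** (P + u *\<^sub>R Q)"
    by (simp add: matrix_mul_assoc)
  also have "\<dots> = mat 1"
    using inv1 inv2 TS unfolding R\<^sub>1_def R\<^sub>2_def
    by (simp add: matrix_inv_left flip: matrix_mul_assoc)
  finally have "matrix_inv ((2 / (1 - u)\<^sup>2) *\<^sub>R ((u *\<^sub>R P + Q) ** S ** (P + u *\<^sub>R Q)))
      = ((1 - u)\<^sup>2 / 2) *\<^sub>R (R\<^sub>1 ** (P + Q) ** R\<^sub>2)"
    using u by (subst matrix_inv_scaleR_of_left_inverse) auto
  also have "\<dots> = ((1 - u)\<^sup>2 / (2 * (1 + u))) *\<^sub>R (R\<^sub>1 + R\<^sub>2)"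
  proof -
    have "R\<^sub>1 + R\<^sub>2 = (1 + u) *\<^sub>R (R\<^sub>1 ** (P + Q) ** R\<^sub>2)"
      by (rule sum_of_inverse_pencils)
        (simp_all add: R\<^sub>1_def R\<^sub>2_def matrix_inv_left[OF inv1] matrix_inv_right[OF inv2])
    then have "((1 - u)\<^sup>2 / (2 * (1 + u))) *\<^sub>R (R\<^sub>1 + R\<^sub>2)
        = ((1 - u)\<^sup>2 / (2 * (1 + u)) * (1 + u)) *\<^sub>R (R\<^sub>1 ** (P + Q) ** R\<^sub>2)"
      by simp
    moreover have "(1 - u)\<^sup>2 / (2 * (1 + u)) * (1 + u) = (1 - u)\<^sup>2 / 2"
      using u by (simp add: field_simps)
    ultimately show ?thesis by simp
  qed
  finally show ?thesis unfolding sum R\<^sub>1_def R\<^sub>2_def .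
qed

section \<open>Accretive matrices and the pencil P + tQ\<close>

lemma accretive_iff: "accretive M \<longleftrightarrow> (\<forall>x. x \<noteq> 0 \<longrightarrow> 0 < Re (cinner (M *v x) x))"
  unfolding accretive_def pos_def_def using hermitian_ReM Re_cinner_ReM by metis

lemma accretiveD: "accretive M \<Longrightarrow> x \<noteq> 0 \<Longrightarrow> 0 < Re (cinner (M *v x) x)"
  by (simp add: accretive_iff)

lemma accretive_Re_cinner_nonneg: "accretive M \<Longrightarrow> 0 \<le> Re (cinner (M *v x) x)"
  by (cases "x = 0") (auto dest: accretiveD[of M x])

lemma accretive_add_scaleR:
  "accretive P \<Longrightarrow> accretive Q \<Longrightarrow> 0 \<le> s \<Longrightarrow> accretive (P + s *\<^sub>R Q)"
  by (auto simp: accretive_iff matrix_vector_mult_add_rdistrib matrix_vector_mult_scaleR_left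
      cinner_add_left cinner_scaleR_left intro!: add_pos_nonneg)

lemma accretive_scaleR: "accretive P \<Longrightarrow> 0 < s \<Longrightarrow> accretive (s *\<^sub>R P)"
  by (simp add: accretive_iff matrix_vector_mult_scaleR_left cinner_scaleR_left)

lemma accretive_coercive:
  fixes M :: "complex^'n^'n"
  assumes "accretive M"
  obtains a where "a > 0" "\<And>x. a * norm x ^ 2 \<le> Re (cinner (M *v x) x)"
proof -
  let ?q = "\<lambda>x. Re (cinner (M *v x) x)"
  have "sphere (0::complex^'n) 1 \<noteq> {}"
    using vector_choose_size[of 1] by auto
  moreover have "continuous_on (sphere 0 1) ?q"
    unfolding cinner_def matrix_vector_mult_def by (intro continuous_intros)
  ultimately obtain x0 where x0: "x0 \<in> sphere 0 1" and min: "\<And>y. y \<in> sphere 0 1 \<Longrightarrow> ?q x0 \<le> ?q y"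
    using continuous_attains_inf[OF compact_sphere] by blast
  have "?q x0 * norm x ^ 2 \<le> ?q x" for x
  proof (cases "x = 0")
    case False
    have "?q x0 \<le> ?q ((1 / norm x) *\<^sub>R x)"
      using False by (intro min) simp
    also have "\<dots> = ?q x / norm x ^ 2"
      by (simp add: matrix_vector_mult_scaleR_right cinner_scaleR_left cinner_scaleR_right
          power2_eq_square)
    finally show ?thesis using False by (simp add: field_simps)
  qed simp
  moreover have "?q x0 > 0" using x0 by (intro accretiveD[OF assms]) auto
  ultimately show thesis using that by blast
qed

lemma coercive_norm_mult_ge:
  assumes "\<And>x. c * norm x ^ 2 \<le> Re (cinner (M *v x) x)"
  shows "c * norm x \<le> norm (M *v x)"
proof (cases "x = 0")
  case False
  have "c * norm x * norm x \<le> Re (cinner (M *v x) x)" using assms[of x] by (simp add: power2_eq_square mult.assoc)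
  also have "\<dots> \<le> norm (M *v x) * norm x"
    using complex_Re_le_cmod norm_cinner_le order_trans by blast
  finally show ?thesis using False by simp
qed simp

lemma accretive_invertible: "accretive M \<Longrightarrow> invertible M"
  using matrix_left_invertible_ker invertible_left_inverse accretiveD
  by (metis cinner_zero_left less_irrefl zero_complex.simps(1))

lemma accretive_matrix_inv:
  fixes M :: "complex^'n^'n"
  assumes "accretive M" shows "accretive (matrix_inv M)"
  unfolding accretive_iff
proof (intro allI impI)
  fix y :: "complex^'n" assume "y \<noteq> 0"
  let ?x = "matrix_inv M *v y"
  have Mx: "M *v ?x = y"
    by (simp add: matrix_vector_mul_assoc matrix_inv_right[OF accretive_invertible[OF assms]])
  with \<open>y \<noteq> 0\<close> have "0 < Re (cinner (M *v ?x) ?x)" by (intro accretiveD[OF assms]) auto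
  also have "Re (cinner (M *v ?x) ?x) = Re (cinner (matrix_inv M *v y) y)"
    using Mx cinner_commute by (metis cnj.simps(1))
  finally show "0 < Re (cinner (matrix_inv M *v y) y)" .
qed

lemma norm_axis: "norm (axis i (x::'a::real_normed_vector)) = norm x"
proof -
  have "(\<Sum>j\<in>UNIV. (norm (axis i x $ j))\<^sup>2) = (\<Sum>j\<in>UNIV. if j = i then (norm x)\<^sup>2 else 0)"
    by (rule sum.cong) (auto simp: axis_def)
  then show ?thesis unfolding norm_vec_def L2_set_def by simp
qed

lemma norm_vec_le_sum: "norm (v::'a::real_normed_vector^'n) \<le> (\<Sum>i\<in>UNIV. norm (v $ i))"
  unfolding norm_vec_def by (rule L2_set_le_sum) simp

lemma norm_matrix_le_of_bound:
  fixes M :: "complex^'n^'m"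
  assumes "\<And>z. norm (M *v z) \<le> C * norm z"
  shows "norm M \<le> real CARD('m) * real CARD('n) * C"
proof -
  have "cmod (M $ i $ j) \<le> C" for i j
  proof -
    have "(M *v axis j 1) $ i = M $ i $ j"
      by (simp add: matrix_vector_mult_def axis_def if_distrib cong: if_cong)
    then have "cmod (M $ i $ j) \<le> norm (M *v axis j 1)"
      by (metis Finite_Cartesian_Product.norm_nth_le)
    also have "\<dots> \<le> C" using assms[of "axis j 1"] by (simp add: norm_axis)
    finally show ?thesis .
  qed
  then have "(\<Sum>i\<in>UNIV. \<Sum>j\<in>UNIV. cmod (M $ i $ j)) \<le> (\<Sum>i\<in>(UNIV::'m set). \<Sum>j\<in>(UNIV::'n set). C)"
    by (intro sum_mono)
  moreover have "norm M \<le> (\<Sum>i\<in>UNIV. \<Sum>j\<in>UNIV. cmod (M $ i $ j))"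
    by (rule order_trans[OF norm_vec_le_sum sum_mono[OF norm_vec_le_sum]])
  ultimately show ?thesis by simp
qed

lemma norm_matrix_inv_mult_le:
  fixes N :: "complex^'n^'n"
  assumes "0 < c" and coercive: "\<And>x. c * norm x ^ 2 \<le> Re (cinner (N *v x) x)"
  shows "norm (matrix_inv N *v z) \<le> norm z / c"
proof -
  have "accretive N"
    unfolding accretive_iff
  proof (intro allI impI)
    fix x :: "complex^'n" assume "x \<noteq> 0"
    then have "0 < c * norm x ^ 2" using \<open>0 < c\<close> by simp
    also have "\<dots> \<le> Re (cinner (N *v x) x)" by (rule coercive)
    finally show "0 < Re (cinner (N *v x) x)" .
  qed
  then have "N *v (matrix_inv N *v z) = z"
    by (simp add: matrix_vector_mul_assoc matrix_inv_right accretive_invertible)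
  then have "c * norm (matrix_inv N *v z) \<le> norm z"
    using coercive_norm_mult_ge[OF coercive, of "matrix_inv N *v z"] by simp
  then show ?thesis using \<open>0 < c\<close> by (simp add: field_simps)
qed

lemma accretive_pencil_coercive:
  fixes P Q :: "complex^'n^'n"
  assumes "accretive P" "accretive Q"
  obtains a b where "0 < a" "0 < b"
    "\<And>t x. 0 \<le> t \<Longrightarrow> (a + t * b) * norm x ^ 2 \<le> Re (cinner ((P + t *\<^sub>R Q) *v x) x)"
proof -
  obtain a where a: "0 < a" "\<And>x. a * norm x ^ 2 \<le> Re (cinner (P *v x) x)"
    using accretive_coercive[OF assms(1)] by blast
  obtain b where b: "0 < b" "\<And>x. b * norm x ^ 2 \<le> Re (cinner (Q *v x) x)"
    using accretive_coercive[OF assms(2)] by blast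
  have "(a + t * b) * norm x ^ 2 \<le> Re (cinner ((P + t *\<^sub>R Q) *v x) x)" if "0 \<le> t" for t x
    using a(2)[of x] mult_left_mono[OF b(2)[of x] that]
    by (simp add: matrix_vector_mult_add_rdistrib matrix_vector_mult_scaleR_left cinner_add_left
        cinner_scaleR_left algebra_simps)
  with a b that show thesis by blast
qed

lemma norm_pencil_inv_le:
  fixes P Q :: "complex^'n^'n"
  assumes "accretive P" "accretive Q"
  obtains a b where "0 < a" "0 < b"
    "\<And>t z. 0 \<le> t \<Longrightarrow> norm (matrix_inv (P + t *\<^sub>R Q) *v z) \<le> norm z / (a + t * b)"
proof -
  obtain a b where ab: "0 < a" "0 < b"
    and co: "\<And>t x. 0 \<le> t \<Longrightarrow> (a + t * b) * norm x ^ 2 \<le> Re (cinner ((P + t *\<^sub>R Q) *v x) x)"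
    using accretive_pencil_coercive[OF assms] by blast
  have bound: "norm (matrix_inv (P + t *\<^sub>R Q) *v z) \<le> norm z / (a + t * b)" if "0 \<le> t" for t z
  proof (rule norm_matrix_inv_mult_le)
    show "0 < a + t * b" using ab that by (simp add: add_pos_nonneg)
  qed (rule co[OF that])
  show thesis by (rule that[OF ab bound])
qed

lemma norm_pencil_inv_diff_le:
  fixes P Q :: "complex^'n^'n"
  assumes "accretive P" "accretive Q" "0 \<le> s"
  obtains K where
    "\<And>t. 0 \<le> t \<Longrightarrow> norm (matrix_inv (P + t *\<^sub>R Q) - matrix_inv (P + s *\<^sub>R Q)) \<le> K * \<bar>t - s\<bar>"
proof -
  define R where "R t = matrix_inv (P + t *\<^sub>R Q)" for t
  obtain a b where ab: "0 < a" "0 < b"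
    and bound: "\<And>t z. 0 \<le> t \<Longrightarrow> norm (R t *v z) \<le> norm z / (a + t * b)"
    unfolding R_def using norm_pencil_inv_le[OF assms(1,2)] by blast
  obtain K where K: "\<And>z. norm ((Q ** R s) *v z) \<le> norm z * K"
    using bounded_linear.bounded[OF matrix_vector_mul_bounded_linear] by blast
  have inv: "invertible (P + t *\<^sub>R Q)" if "0 \<le> t" for t
    using accretive_invertible[OF accretive_add_scaleR[OF assms(1,2) that]] .
  have "norm ((R t - R s) *v z) \<le> (\<bar>t - s\<bar> * K / a) * norm z" if "0 \<le> t" for t z
  proof -
    have "R t - R s = (s - t) *\<^sub>R (R t ** Q ** R s)"
      unfolding R_def matrix_inv_diff[OF inv[OF that] inv[OF assms(3)]]
      by (simp add: scalar_matrix_assoc matrix_scalar_ac flip: scaleR_diff_left)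
    then have "norm ((R t - R s) *v z) = \<bar>t - s\<bar> * norm (R t *v ((Q ** R s) *v z))"
      by (simp add: matrix_vector_mult_scaleR_left matrix_vector_mul_assoc matrix_mul_assoc abs_minus_commute)
    also have "\<dots> \<le> \<bar>t - s\<bar> * (norm z * K / a)"
    proof (rule mult_left_mono)
      have "norm (R t *v ((Q ** R s) *v z)) \<le> norm ((Q ** R s) *v z) / (a + t * b)"
        by (rule bound[OF that])
      also have "\<dots> \<le> norm ((Q ** R s) *v z) / a"
        using ab that by (intro divide_left_mono) (auto intro!: mult_pos_pos add_pos_nonneg)
      also have "\<dots> \<le> norm z * K / a"
        using K[of z] ab by (simp add: divide_right_mono)
      finally show "norm (R t *v ((Q ** R s) *v z)) \<le> norm z * K / a" .
    qed simp
    finally show ?thesis by (simp add: mult_ac)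
  qed
  then have "norm (R t - R s) \<le> real CARD('n) * real CARD('n) * (\<bar>t - s\<bar> * K / a)" if "0 \<le> t" for t
    using that by (intro norm_matrix_le_of_bound) blast
  then show thesis
    by (intro that[of "real CARD('n) * real CARD('n) * K / a"]) (simp add: R_def mult_ac)
qed

lemma continuous_on_pencil_inv:
  fixes P Q :: "complex^'n^'n"
  assumes "accretive P" "accretive Q"
  shows "continuous_on {0..} (\<lambda>t. matrix_inv (P + t *\<^sub>R Q))"
proof -
  define R where "R t = matrix_inv (P + t *\<^sub>R Q)" for t
  have "(R \<longlongrightarrow> R s) (at s within {0..})" if s: "0 \<le> s" for s
  proof -
    obtain K where K: "\<And>t. 0 \<le> t \<Longrightarrow> norm (R t - R s) \<le> K * \<bar>t - s\<bar>"
      unfolding R_def using norm_pencil_inv_diff_le[OF assms s] by blast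
    then have "eventually (\<lambda>t. norm (R t - R s) \<le> K * \<bar>t - s\<bar>) (at s within {0..})"
      unfolding eventually_at_filter by (auto intro: always_eventually)
    moreover have "((\<lambda>t. K * \<bar>t - s\<bar>) \<longlongrightarrow> 0) (at s within {0..})"
      by (intro tendsto_eq_intros) auto
    ultimately have "((\<lambda>t. R t - R s) \<longlongrightarrow> 0) (at s within {0..})"
      by (rule Lim_null_comparison)
    then show ?thesis by (rule LIM_zero_cancel)
  qed
  then have "continuous_on {0..} R"
    unfolding continuous_on_def by (simp add: atLeast_iff)
  then show ?thesis unfolding R_def[abs_def] .
qed

section \<open>The integral defining the weighted geometric mean\<close>

definition wgeo_integrand :: "real \<Rightarrow> complex^'n^'n \<Rightarrow> complex^'n^'n \<Rightarrow> real \<Rightarrow> complex^'n^'n" where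
  "wgeo_integrand l P Q t = (t powr (l - 1)) *\<^sub>R matrix_inv (P + t *\<^sub>R Q)"

lemma wgeo_mean_eq_integral:
  "wgeo_mean l A B = (sin (l * pi) / pi) *\<^sub>R integral {0<..} (wgeo_integrand l (matrix_inv A) (matrix_inv B))"
  unfolding wgeo_mean_def wgeo_integrand_def ..

lemma continuous_on_wgeo_integrand:
  fixes P Q :: "complex^'n^'n"
  assumes "accretive P" "accretive Q"
  shows "continuous_on {0<..} (wgeo_integrand l P Q)"
proof -
  have "continuous_on {0<..} (\<lambda>t. matrix_inv (P + t *\<^sub>R Q))"
    using continuous_on_pencil_inv[OF assms] by (rule continuous_on_subset) auto
  then show ?thesis
    unfolding wgeo_integrand_def by (intro continuous_intros) auto
qed

lemma norm_wgeo_integrand_le: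
  fixes P Q :: "complex^'n^'n"
  assumes "accretive P" "accretive Q"
  obtains a b where "0 < a" "0 < b"
    "\<And>t. 0 < t \<Longrightarrow> norm (wgeo_integrand l P Q t)
       \<le> t powr (l - 1) * (real CARD('n) * real CARD('n) / (a + t * b))"
proof -
  obtain a b where ab: "0 < a" "0 < b"
    and bound: "\<And>t z. 0 \<le> t \<Longrightarrow> norm (matrix_inv (P + t *\<^sub>R Q) *v z) \<le> norm z / (a + t * b)"
    using norm_pencil_inv_le[OF assms] by blast
  have integrand: "norm (wgeo_integrand l P Q t) \<le> t powr (l - 1) * (real CARD('n) * real CARD('n) / (a + t * b))"
    if "0 < t" for t
  proof -
    have "norm (matrix_inv (P + t *\<^sub>R Q)) \<le> real CARD('n) * real CARD('n) * (1 / (a + t * b))"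
      using bound[of t] that by (intro norm_matrix_le_of_bound) simp
    then have "t powr (l - 1) * norm (matrix_inv (P + t *\<^sub>R Q))
        \<le> t powr (l - 1) * (real CARD('n) * real CARD('n) / (a + t * b))"
      by (intro mult_left_mono) simp_all
    then show ?thesis unfolding wgeo_integrand_def by simp
  qed
  show thesis by (rule that[OF ab integrand])
qed

lemma wgeo_integrand_absolutely_integrable:
  fixes P Q :: "complex^'n^'n"
  assumes "accretive P" "accretive Q" "0 < l" "l < 1"
  shows "wgeo_integrand l P Q absolutely_integrable_on {0<..}"
proof -
  define C where "C = real CARD('n) * real CARD('n)"
  obtain a b where ab: "0 < a" "0 < b"
    and norm_le: "\<And>t. 0 < t \<Longrightarrow> norm (wgeo_integrand l P Q t) \<le> t powr (l - 1) * (C / (a + t * b))"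
    unfolding C_def using norm_wgeo_integrand_le[OF assms(1,2)] by blast
  have C: "0 \<le> C" unfolding C_def by simp
  have measurable: "wgeo_integrand l P Q \<in> borel_measurable (lebesgue_on S)"
    if "S \<subseteq> {0<..}" "S \<in> sets lebesgue" for S
    using continuous_on_subset[OF continuous_on_wgeo_integrand[OF assms(1,2)] that(1)] that(2)
    by (rule continuous_imp_measurable_on_sets_lebesgue)
  have near_zero: "wgeo_integrand l P Q absolutely_integrable_on {0<..1}"
  proof (rule measurable_bounded_by_integrable_imp_absolutely_integrable)
    show "(\<lambda>t. (C / a) * t powr (l - 1)) integrable_on {0<..1}"
      using integrable_cmul[OF integrable_on_powr_from_0', of "l - 1" 1 "C / a"] assms(3) by simp
    show "norm (wgeo_integrand l P Q t) \<le> (C / a) * t powr (l - 1)" if "t \<in> {0<..1}" for t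
    proof -
      have "norm (wgeo_integrand l P Q t) \<le> t powr (l - 1) * (C / (a + t * b))"
        using that by (intro norm_le) simp
      also have "\<dots> \<le> t powr (l - 1) * (C / a)"
        using that ab C by (intro mult_left_mono divide_left_mono) (auto intro!: mult_pos_pos add_pos_nonneg)
      finally show ?thesis by (simp add: mult.commute)
    qed
  qed (auto intro!: measurable)
  have near_infinity: "wgeo_integrand l P Q absolutely_integrable_on {1..}"
  proof (rule measurable_bounded_by_integrable_imp_absolutely_integrable)
    show "(\<lambda>t. (C / b) * t powr (l - 2)) integrable_on {1..}"
      using integrable_cmul[OF has_integral_integrable[OF has_integral_powr_to_inf], of "l - 2" 1 "C / b"]
        assms(4) by simp
    show "norm (wgeo_integrand l P Q t) \<le> (C / b) * t powr (l - 2)" if "t \<in> {1..}" for t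
    proof -
      have t: "0 < t" using that by simp
      have "norm (wgeo_integrand l P Q t) \<le> t powr (l - 1) * (C / (a + t * b))"
        by (rule norm_le[OF t])
      also have "\<dots> \<le> t powr (l - 1) * (C / (t * b))"
        using t ab C by (intro mult_left_mono divide_left_mono) (auto intro!: mult_pos_pos add_pos_pos)
      also have "\<dots> = (C / b) * t powr (l - 2)"
        using t by (simp add: powr_diff field_simps power2_eq_square)
      finally show ?thesis .
    qed
  qed (auto intro!: measurable)
  have "{0<..1} \<union> {1..} = {0::real<..}" by auto
  then show ?thesis using absolutely_integrable_Un[OF near_zero near_infinity] by simp
qed

lemma Re_cinner_wgeo_mean_nonneg:
  fixes A B :: "complex^'n^'n"
  assumes "accretive A" "accretive B" "0 < l" "l < 1"
  shows "0 \<le> Re (cinner (wgeo_mean l A B *v x) x)"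
proof -
  define P Q where "P = matrix_inv A" and "Q = matrix_inv B"
  have P: "accretive P" and Q: "accretive Q"
    unfolding P_def Q_def using assms(1,2) by (simp_all add: accretive_matrix_inv)
  define L where "L M = Re (cinner ((M::complex^'n^'n) *v x) x)" for M
  have "linear L"
    by (rule linearI) (simp_all add: L_def matrix_vector_mult_add_rdistrib cinner_add_left
        matrix_vector_mult_scaleR_left cinner_scaleR_left)
  then have L: "bounded_linear L" by (simp add: linear_conv_bounded_linear)
  have int: "wgeo_integrand l P Q integrable_on {0<..}"
    using set_lebesgue_integral_eq_integral(1)[OF wgeo_integrand_absolutely_integrable[OF P Q assms(3,4)]] .
  have "0 \<le> integral {0<..} (L \<circ> wgeo_integrand l P Q)"
  proof (rule integral_nonneg)
    show "(L \<circ> wgeo_integrand l P Q) integrable_on {0<..}" by (rule integrable_linear[OF int L])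
    fix t :: real assume "t \<in> {0<..}"
    then have "accretive (matrix_inv (P + t *\<^sub>R Q))"
      by (intro accretive_matrix_inv accretive_add_scaleR[OF P Q]) simp
    then show "0 \<le> (L \<circ> wgeo_integrand l P Q) t"
      unfolding L_def wgeo_integrand_def comp_def matrix_vector_mult_scaleR_left cinner_scaleR_left
      by (simp add: accretive_Re_cinner_nonneg)
  qed
  also have "integral {0<..} (L \<circ> wgeo_integrand l P Q) = L (integral {0<..} (wgeo_integrand l P Q))"
    by (rule integral_linear[OF int L])
  finally have "0 \<le> L (integral {0<..} (wgeo_integrand l P Q))" .
  moreover have "0 \<le> sin (l * pi)" using assms(3,4) by (intro sin_ge_zero) auto
  ultimately show ?thesis
    unfolding wgeo_mean_eq_integral P_def[symmetric] Q_def[symmetric]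
    by (simp add: L_def matrix_vector_mult_scaleR_left cinner_scaleR_left)
qed

section \<open>Two substitutions on the half-line\<close>

lemma integral_fold_at_one:
  fixes f :: "real \<Rightarrow> 'a::euclidean_space"
  assumes f: "f absolutely_integrable_on {0<..}"
  shows "(\<lambda>u. f u + (1 / u\<^sup>2) *\<^sub>R f (1 / u)) absolutely_integrable_on {0<..<1}"
    and "integral {0<..<1} (\<lambda>u. f u + (1 / u\<^sup>2) *\<^sub>R f (1 / u)) = integral {0<..} f"
proof -
  have lower: "f absolutely_integrable_on {0<..<1}" and upper: "f absolutely_integrable_on {1<..}"
    by (auto intro: set_integrable_subset[OF f])
  have "(\<lambda>u. 1 / u) ` {0<..<1} = {1::real<..}"
  proof (intro equalityI subsetI)
    fix t :: real assume "t \<in> {1<..}"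
    then show "t \<in> (\<lambda>u. 1 / u) ` {0<..<1}"
      by (intro image_eqI[of _ _ "1 / t"]) (auto simp: divide_less_eq)
  qed (auto simp: less_divide_eq)
  moreover have "((\<lambda>u. 1 / u) has_field_derivative - (1 / u\<^sup>2)) (at u within {0<..<1})"
    if "u \<in> {0<..<1}" for u :: real
    using that by (auto intro!: derivative_eq_intros simp: power2_eq_square)
  moreover have "inj_on (\<lambda>u::real. 1 / u) {0<..<1}"
    by (rule inj_onI) auto
  ultimately have inverted: "(\<lambda>u. (1 / u\<^sup>2) *\<^sub>R f (1 / u)) absolutely_integrable_on {0<..<1}
      \<and> integral {0<..<1} (\<lambda>u. (1 / u\<^sup>2) *\<^sub>R f (1 / u)) = integral {1<..} f"
    using has_absolute_integral_change_of_variables_real[of "{0<..<1}" "\<lambda>u. 1 / u"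
        "\<lambda>u. - (1 / u\<^sup>2)" f "integral {1<..} f"] upper
    by simp
  show "(\<lambda>u. f u + (1 / u\<^sup>2) *\<^sub>R f (1 / u)) absolutely_integrable_on {0<..<1}"
    using lower inverted by (intro set_integral_add(1)) auto
  have "integral {0<..} f = integral ({0<..<1} \<union> {1<..}) f"
    by (rule integral_spike_set) (auto intro: negligible_subset[OF negligible_sing[of 1]])
  also have "\<dots> = integral {0<..<1} f + integral {1<..} f"
  proof (rule integral_Un)
    have "{0<..<1} \<inter> {1::real<..} = {}" by auto
    then show "negligible ({0<..<1} \<inter> {1::real<..})" by simp
  qed (use lower upper in \<open>auto dest: set_lebesgue_integral_eq_integral(1)\<close>)
  also have "\<dots> = integral {0<..<1} (\<lambda>u. f u + (1 / u\<^sup>2) *\<^sub>R f (1 / u))"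
    using lower inverted by (subst integral_add) (auto dest: set_lebesgue_integral_eq_integral(1))
  finally show "integral {0<..<1} (\<lambda>u. f u + (1 / u\<^sup>2) *\<^sub>R f (1 / u)) = integral {0<..} f" ..
qed

lemma image_4u_over_square:
  "(\<lambda>u::real. 4 * u / (1 - u)\<^sup>2) ` {0<..<1} = {0<..}"
proof (intro equalityI subsetI)
  fix t :: real assume "t \<in> {0<..}"
  define w where "w = sqrt (1 + t)"
  have w: "1 < w" "w\<^sup>2 = 1 + t" using \<open>t \<in> {0<..}\<close> by (auto simp: w_def)
  \<comment> \<open>solving \<open>t = 4u/(1-u)\<^sup>2\<close> for \<open>u\<close>\<close>
  have "4 * ((w - 1) / (w + 1)) / (1 - (w - 1) / (w + 1))\<^sup>2 = w\<^sup>2 - 1"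
    using w(1) by (simp add: field_simps power2_eq_square)
  with w show "t \<in> (\<lambda>u. 4 * u / (1 - u)\<^sup>2) ` {0<..<1}"
    by (intro image_eqI[of _ _ "(w - 1) / (w + 1)"]) auto
qed auto

lemma inj_on_4u_over_square: "inj_on (\<lambda>u::real. 4 * u / (1 - u)\<^sup>2) {0<..<1}"
proof (rule inj_onI)
  fix u v :: real assume u: "u \<in> {0<..<1}" and v: "v \<in> {0<..<1}"
    and "4 * u / (1 - u)\<^sup>2 = 4 * v / (1 - v)\<^sup>2"
  then have "u * (1 - v)\<^sup>2 = v * (1 - u)\<^sup>2" by (simp add: field_simps)
  then have "(u - v) * (1 - u * v) = 0" by (simp add: algebra_simps power2_eq_square)
  moreover have "u * v < 1" using u v mult_strict_mono[of u 1 v 1] by simp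
  ultimately show "u = v" by simp
qed

lemma integral_substitution_4u_over_square:
  fixes h :: "real \<Rightarrow> 'a::euclidean_space"
  assumes "(\<lambda>u. (4 * (1 + u) / (1 - u) ^ 3) *\<^sub>R h (4 * u / (1 - u)\<^sup>2)) absolutely_integrable_on {0<..<1}"
  shows "integral {0<..} h = integral {0<..<1} (\<lambda>u. (4 * (1 + u) / (1 - u) ^ 3) *\<^sub>R h (4 * u / (1 - u)\<^sup>2))"
proof -
  let ?g = "\<lambda>u. (4 * (1 + u) / (1 - u) ^ 3) *\<^sub>R h (4 * u / (1 - u)\<^sup>2)"
  have abs_eq: "\<bar>4 * (1 + u) / (1 - u) ^ 3\<bar> *\<^sub>R h (4 * u / (1 - u)\<^sup>2) = ?g u"
    if "u \<in> {0<..<1}" for u :: real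
    using that by simp
  have deriv: "((\<lambda>u. 4 * u / (1 - u)\<^sup>2) has_field_derivative 4 * (1 + u) / (1 - u) ^ 3) (at u within {0<..<1})"
    if "u \<in> {0<..<1}" for u :: real
    using that by (auto intro!: derivative_eq_intros simp: divide_simps)
      (simp_all add: algebra_simps power2_eq_square power3_eq_cube power4_eq_xxxx)
  have "(\<lambda>u. \<bar>4 * (1 + u) / (1 - u) ^ 3\<bar> *\<^sub>R h (4 * u / (1 - u)\<^sup>2)) absolutely_integrable_on {0<..<1}"
    using set_integrable_cong[OF refl refl abs_eq] assms by (rule iffD2)
  moreover have "integral {0<..<1} (\<lambda>u. \<bar>4 * (1 + u) / (1 - u) ^ 3\<bar> *\<^sub>R h (4 * u / (1 - u)\<^sup>2))
      = integral {0<..<1} ?g"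
    by (rule integral_cong[OF abs_eq])
  ultimately have "h absolutely_integrable_on (\<lambda>u. 4 * u / (1 - u)\<^sup>2) ` {0<..<1}
      \<and> integral ((\<lambda>u. 4 * u / (1 - u)\<^sup>2) ` {0<..<1}) h = integral {0<..<1} ?g"
    by (intro has_absolute_integral_change_of_variables_real[OF _ deriv inj_on_4u_over_square, THEN iffD1])
      auto
  then show ?thesis unfolding image_4u_over_square by simp
qed

section \<open>Invariance of the geometric mean\<close>

lemma powr_half_minus_one: "0 < x \<Longrightarrow> x powr (1/2 - 1) = 1 / sqrt x"
  by (simp add: powr_minus_divide powr_half_sqrt)

lemma substitution_coefficients:
  fixes u :: real
  assumes u: "0 < u" "u < 1"
  shows "4 * (1 + u) / (1 - u) ^ 3 * ((4 * u / (1 - u)\<^sup>2) powr (1/2 - 1) * ((1 - u)\<^sup>2 / (2 * (1 + u))))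
      = u powr (1/2 - 1)"
    and "1 / u\<^sup>2 * ((1 / u) powr (1/2 - 1) * u) = u powr (1/2 - 1)"
proof -
  have psi: "(4 * u / (1 - u)\<^sup>2) powr (1/2 - 1) = (1 - u) / (2 * sqrt u)"
    using u by (subst powr_half_minus_one) (auto simp: real_sqrt_divide real_sqrt_mult)
  have "4 * e / d ^ 3 * (d / (2 * r) * (d\<^sup>2 / (2 * e))) = 1 / r"
    if "d \<noteq> 0" "e \<noteq> 0" "r \<noteq> 0" for d e r :: real
    using that by (simp add: field_simps power2_eq_square power3_eq_cube)
  from this[of "1 - u" "1 + u" "sqrt u"]
  show "4 * (1 + u) / (1 - u) ^ 3 * ((4 * u / (1 - u)\<^sup>2) powr (1/2 - 1) * ((1 - u)\<^sup>2 / (2 * (1 + u))))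
      = u powr (1/2 - 1)"
    unfolding psi powr_half_minus_one[OF u(1)] using u by simp
  have "(1 / u) powr (1/2 - 1) = sqrt u"
    using u by (subst powr_half_minus_one) (auto simp: real_sqrt_divide)
  then show "1 / u\<^sup>2 * ((1 / u) powr (1/2 - 1) * u) = u powr (1/2 - 1)"
    unfolding powr_half_minus_one[OF u(1)] using u by (simp add: field_simps power2_eq_square)
qed

lemma wgeo_integrand_arith_harm:
  fixes A B :: "complex^'n^'n"
  assumes "accretive A" "accretive B" and u: "0 < u" "u < 1"
  shows "(4 * (1 + u) / (1 - u) ^ 3) *\<^sub>R
           wgeo_integrand (1/2) (matrix_inv (arith_mean A B)) (matrix_inv (harm_mean A B)) (4 * u / (1 - u)\<^sup>2)
       = wgeo_integrand (1/2) (matrix_inv A) (matrix_inv B) u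
         + (1 / u\<^sup>2) *\<^sub>R wgeo_integrand (1/2) (matrix_inv A) (matrix_inv B) (1 / u)"
proof -
  define P Q where "P = matrix_inv A" and "Q = matrix_inv B"
  define R\<^sub>1 R\<^sub>2 where "R\<^sub>1 = matrix_inv (P + u *\<^sub>R Q)" and "R\<^sub>2 = matrix_inv (u *\<^sub>R P + Q)"
  have P: "accretive P" and Q: "accretive Q"
    unfolding P_def Q_def using assms(1,2) by (simp_all add: accretive_matrix_inv)
  have PQ: "accretive (P + Q)" using accretive_add_scaleR[OF P Q, of 1] by simp
  have inv1: "invertible (P + u *\<^sub>R Q)"
    using u by (intro accretive_invertible accretive_add_scaleR[OF P Q]) simp
  have inv2: "invertible (u *\<^sub>R P + Q)"
    using accretive_invertible[OF accretive_add_scaleR[OF Q P, of u]] u by (simp add: add.commute)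
  have "matrix_inv (harm_mean A B) = (P + Q) /\<^sub>R 2"
    unfolding harm_mean_def P_def Q_def
    using accretive_invertible[OF accretive_scaleR[OF PQ, of "1/2"]] P_def Q_def
    by (simp add: matrix_inv_matrix_inv)
  then have arith_harm: "matrix_inv (matrix_inv (arith_mean A B) + (4 * u / (1 - u)\<^sup>2) *\<^sub>R matrix_inv (harm_mean A B))
      = ((1 - u)\<^sup>2 / (2 * (1 + u))) *\<^sub>R (R\<^sub>1 + R\<^sub>2)"
    unfolding arith_mean_def R\<^sub>1_def R\<^sub>2_def
    using matrix_inv_arith_harm_pencil[OF _ _ accretive_invertible[OF PQ] inv1 inv2 u]
      accretive_invertible[OF assms(1)] accretive_invertible[OF assms(2)]
    by (simp add: P_def Q_def matrix_inv_left)
  have "P + (1 / u) *\<^sub>R Q = (1 / u) *\<^sub>R (u *\<^sub>R P + Q)" using u by (simp add: algebra_simps)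
  then have inverted: "matrix_inv (P + (1 / u) *\<^sub>R Q) = u *\<^sub>R R\<^sub>2"
    unfolding R\<^sub>2_def using u by (simp add: matrix_inv_scaleR_of_left_inverse[OF matrix_inv_left[OF inv2]])
  show ?thesis
    unfolding wgeo_integrand_def P_def[symmetric] Q_def[symmetric] arith_harm inverted R\<^sub>1_def[symmetric]
    by (simp only: scaleR_scaleR substitution_coefficients[OF u] scaleR_add_right)
qed

lemma geo_mean_arith_harm:
  fixes A B :: "complex^'n^'n"
  assumes "accretive A" "accretive B"
  shows "geo_mean (arith_mean A B) (harm_mean A B) = geo_mean A B"
proof -
  let ?f = "wgeo_integrand (1/2) (matrix_inv A) (matrix_inv B)"
  let ?h = "wgeo_integrand (1/2) (matrix_inv (arith_mean A B)) (matrix_inv (harm_mean A B))"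
  let ?g = "\<lambda>u. (4 * (1 + u) / (1 - u) ^ 3) *\<^sub>R ?h (4 * u / (1 - u)\<^sup>2)"
  have f: "?f absolutely_integrable_on {0<..}"
    using assms by (intro wgeo_integrand_absolutely_integrable accretive_matrix_inv) auto
  have pointwise: "?g u = ?f u + (1 / u\<^sup>2) *\<^sub>R ?f (1 / u)" if "u \<in> {0<..<1}" for u
    using wgeo_integrand_arith_harm[OF assms] that by simp
  have "?g absolutely_integrable_on {0<..<1}"
    using set_integrable_cong[OF refl refl pointwise] integral_fold_at_one(1)[OF f] by (rule iffD2)
  then have "integral {0<..} ?h = integral {0<..<1} ?g"
    by (rule integral_substitution_4u_over_square)
  also have "\<dots> = integral {0<..<1} (\<lambda>u. ?f u + (1 / u\<^sup>2) *\<^sub>R ?f (1 / u))"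
    by (rule integral_cong[OF pointwise])
  also have "\<dots> = integral {0<..} ?f"
    by (rule integral_fold_at_one(2)[OF f])
  finally show ?thesis
    unfolding geo_mean_def wgeo_mean_eq_integral by simp
qed

lemma loewner_le_scaleR:
  fixes H :: "complex^'n^'n"
  assumes "hermitian_mat H" "\<And>x. 0 \<le> Re (cinner (H *v x) x)" "a \<le> b"
  shows "loewner_le (a *\<^sub>R H) (b *\<^sub>R H)"
proof -
  have "b *\<^sub>R H - a *\<^sub>R H = (b - a) *\<^sub>R H" by (simp add: scaleR_diff_left)
  moreover have "hermitian_mat ((b - a) *\<^sub>R H)"
    using assms(1) unfolding hermitian_mat_def adjoint_mat_scaleR by simp
  moreover have "0 \<le> Re (cinner (((b - a) *\<^sub>R H) *v x) x)" for x
    unfolding matrix_vector_mult_scaleR_left cinner_scaleR_left using assms(2)[of x] assms(3) by simp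
  ultimately show ?thesis unfolding loewner_le_def pos_semidef_def by simp
qed

theorem mainTheorem5:
  fixes A B :: "complex^'n^'n" and \<alpha> :: real
  assumes "accretive A" and "accretive B"
    and "0 \<le> \<alpha>" and "\<alpha> < pi / 2"
    and "numerical_range A \<subseteq> sector \<alpha>" and "numerical_range B \<subseteq> sector \<alpha>"
  shows "loewner_le ((cos \<alpha> ^ 3) *\<^sub>R ReM (geo_mean (arith_mean A B) (harm_mean A B))) (ReM (geo_mean A B))
       \<and> loewner_le (ReM (geo_mean A B)) ((1 / cos \<alpha> ^ 2) *\<^sub>R ReM (geo_mean (arith_mean A B) (harm_mean A B)))"
proof -
  define H where "H = ReM (geo_mean A B)"
  have psd: "0 \<le> Re (cinner (H *v x) x)" for x
    unfolding H_def Re_cinner_ReM geo_mean_def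
    using assms(1,2) by (rule Re_cinner_wgeo_mean_nonneg) auto
  have "0 < cos \<alpha>" using assms(3,4) by (intro cos_gt_zero_pi) auto
  then have "cos \<alpha> ^ 3 \<le> 1" "1 \<le> 1 / cos \<alpha> ^ 2"
    by (simp_all add: power_le_one le_divide_eq)
  moreover have "hermitian_mat H" unfolding H_def by (rule hermitian_ReM)
  ultimately have "loewner_le ((cos \<alpha> ^ 3) *\<^sub>R H) (1 *\<^sub>R H)" "loewner_le (1 *\<^sub>R H) ((1 / cos \<alpha> ^ 2) *\<^sub>R H)"
    using loewner_le_scaleR[OF _ psd] by blast+
  then show ?thesis
    unfolding geo_mean_arith_harm[OF assms(1,2)] H_def by simp
qed

end
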